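(* Let $k>d$, let $\mathbf X\in\mathbb R^{k\times d}$ have full column rank $d$ and rows $\mathbf x_i^\top$, and let $\mathbf y\in\mathbb R^k$. Then $\mathbf X^+\mathbf y=\sum_{i=1}^k\dfrac{\det(\mathbf X_{-i}^\top\mathbf X_{-i})}{(k-d)\det(\mathbf X^\top\mathbf X)}\,\mathbf X_{-i}^+\mathbf y_{-i}$, where $\mathbf X_{-i}$ is $\mathbf X$ with its $i$-th row removed, $\mathbf y_{-i}$ is $\mathbf y$ with its $i$-th entry removed, and $^+$ denotes the Moore–Penrose pseudoinverse. *)

theory Defs
  imports "Jordan_Normal_Form.DL_Rank" "Jordan_Normal_Form.Determinant"
begin

text \<open>Moore--Penrose pseudoinverse of a real matrix: the unique matrix satisfying
  the four Penrose conditions (for real matrices the conjugate transpose is the transpose).\<close>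
definition pinv :: "real mat \<Rightarrow> real mat" where
  "pinv A = (THE B. B \<in> carrier_mat (dim_col A) (dim_row A) \<and>
      A * B * A = A \<and> B * A * B = B \<and>
      transpose_mat (A * B) = A * B \<and> transpose_mat (B * A) = B * A)"

text \<open>Matrix with row i removed (rows indexed from 0).\<close>
definition del_row :: "'a mat \<Rightarrow> nat \<Rightarrow> 'a mat" where
  "del_row A i = mat (dim_row A - 1) (dim_col A)
      (\<lambda>(r, c). A $$ (if r < i then r else Suc r, c))"

definition del_entry :: "'a vec \<Rightarrow> nat \<Rightarrow> 'a vec" where
  "del_entry v i = vec (dim_vec v - 1) (\<lambda>r. v $ (if r < i then r else Suc r))"

end

theory Submission
  imports Defs
begin

text \<open>Deleting row \<open>x\<^sub>i\<close> turns the Gram matrix \<open>A = X\<^sup>T X\<close> into the rank-one update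
  \<open>A - x\<^sub>i x\<^sub>i\<^sup>T\<close>. With the leverage \<open>h\<^sub>i = x\<^sub>i\<^sup>T A\<^sup>-\<^sup>1 x\<^sub>i\<close>, the matrix determinant lemma
  gives \<open>det (X\<^sub>-\<^sub>i\<^sup>T X\<^sub>-\<^sub>i) = (1 - h\<^sub>i) det A\<close> and the Sherman--Morrison formula gives
  \<open>(1 - h\<^sub>i) X\<^sub>-\<^sub>i\<^sup>+ y\<^sub>-\<^sub>i = (1 - h\<^sub>i) w + (x\<^sub>i\<^sup>T w - y\<^sub>i) A\<^sup>-\<^sup>1 x\<^sub>i\<close> with \<open>w = X\<^sup>+ y\<close>; when
  \<open>h\<^sub>i = 1\<close> the row is fitted exactly and both sides vanish. Summing over \<open>i\<close>, the leverages add
  up to \<open>tr (X A\<^sup>-\<^sup>1 X\<^sup>T) = d\<close> and the two correction terms cancel, since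
  \<open>\<Sum>\<^sub>i A\<^sup>-\<^sup>1 x\<^sub>i x\<^sub>i\<^sup>T w = w = \<Sum>\<^sub>i y\<^sub>i A\<^sup>-\<^sup>1 x\<^sub>i\<close>; what remains is \<open>(k - d) w\<close>.\<close>

definition outer_prod :: "'a :: comm_ring_1 vec \<Rightarrow> 'a vec \<Rightarrow> 'a mat" where
  "outer_prod a b = mat (dim_vec a) (dim_vec b) (\<lambda>(i, j). a $ i * b $ j)"

lemma outer_prod_carrier [simp]:
  "a \<in> carrier_vec n \<Longrightarrow> b \<in> carrier_vec m \<Longrightarrow> outer_prod a b \<in> carrier_mat n m"
  unfolding outer_prod_def by auto

lemma outer_prod_index [simp]:
  "i < dim_vec a \<Longrightarrow> j < dim_vec b \<Longrightarrow> outer_prod a b $$ (i, j) = a $ i * b $ j"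
  "dim_row (outer_prod a b) = dim_vec a" "dim_col (outer_prod a b) = dim_vec b"
  unfolding outer_prod_def by auto

lemma transpose_outer_prod: "transpose_mat (outer_prod a b) = outer_prod b a"
  by (intro eq_matI) auto

lemma col_outer_prod: "j < dim_vec b \<Longrightarrow> col (outer_prod a b) j = b $ j \<cdot>\<^sub>v a"
  by (intro eq_vecI) (auto simp: ac_simps)

lemma row_outer_prod: "i < dim_vec a \<Longrightarrow> row (outer_prod a b) i = a $ i \<cdot>\<^sub>v b"
  by (intro eq_vecI) auto

lemma mult_outer_prod:
  assumes "M \<in> carrier_mat m n" and "a \<in> carrier_vec n"
  shows "M * outer_prod a b = outer_prod (M *\<^sub>v a) b"
  using assms by (intro eq_matI) (auto simp: col_outer_prod ac_simps)

lemma outer_prod_mult: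
  assumes "M \<in> carrier_mat n m" and "b \<in> carrier_vec n"
  shows "outer_prod a b * M = outer_prod a (transpose_mat M *\<^sub>v b)"
  using assms by (intro eq_matI) (auto simp: row_outer_prod comm_scalar_prod[of _ n])

lemma outer_prod_mult_vec:
  assumes "b \<in> carrier_vec n" and "v \<in> carrier_vec n"
  shows "outer_prod a b *\<^sub>v v = (b \<bullet> v) \<cdot>\<^sub>v a"
  using assms by (intro eq_vecI) (auto simp: row_outer_prod ac_simps)

text \<open>Sylvester's determinant identity, from the two block triangular factorisations of
  \<open>[1 U; V 1]\<close>.\<close>
lemma det_one_minus_mult_commute:
  fixes U :: "'a :: idom mat"
  assumes U: "U \<in> carrier_mat n m" and V: "V \<in> carrier_mat m n"
  shows "det (1\<^sub>m n - U * V) = det (1\<^sub>m m - V * U)"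
proof -
  have UV: "U * V \<in> carrier_mat n n" and VU: "V * U \<in> carrier_mat m m" using U V by auto
  define M where "M = four_block_mat (1\<^sub>m n) U V (1\<^sub>m m)"
  have "four_block_mat (1\<^sub>m n) U (0\<^sub>m m n) (1\<^sub>m m) * four_block_mat (1\<^sub>m n - U * V) (0\<^sub>m n m) V (1\<^sub>m m)
     = four_block_mat (1\<^sub>m n * (1\<^sub>m n - U * V) + U * V) (1\<^sub>m n * 0\<^sub>m n m + U * 1\<^sub>m m)
        (0\<^sub>m m n * (1\<^sub>m n - U * V) + 1\<^sub>m m * V) (0\<^sub>m m n * 0\<^sub>m n m + 1\<^sub>m m * 1\<^sub>m m)"
    by (rule mult_four_block_mat) (use U V UV in auto)
  also have "\<dots> = M" unfolding M_def using U V UV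
    by (intro cong_four_block_mat; intro eq_matI) auto
  finally have M_upper_first: "M = four_block_mat (1\<^sub>m n) U (0\<^sub>m m n) (1\<^sub>m m)
      * four_block_mat (1\<^sub>m n - U * V) (0\<^sub>m n m) V (1\<^sub>m m)" by simp
  have "four_block_mat (1\<^sub>m n) (0\<^sub>m n m) V (1\<^sub>m m - V * U) * four_block_mat (1\<^sub>m n) U (0\<^sub>m m n) (1\<^sub>m m)
     = four_block_mat (1\<^sub>m n * 1\<^sub>m n + 0\<^sub>m n m * 0\<^sub>m m n) (1\<^sub>m n * U + 0\<^sub>m n m * 1\<^sub>m m)
        (V * 1\<^sub>m n + (1\<^sub>m m - V * U) * 0\<^sub>m m n) (V * U + (1\<^sub>m m - V * U) * 1\<^sub>m m)"
    by (rule mult_four_block_mat) (use U V VU in auto)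
  also have "\<dots> = M" unfolding M_def using U V VU
    by (intro cong_four_block_mat; intro eq_matI) auto
  finally have M_lower_first: "M = four_block_mat (1\<^sub>m n) (0\<^sub>m n m) V (1\<^sub>m m - V * U)
      * four_block_mat (1\<^sub>m n) U (0\<^sub>m m n) (1\<^sub>m m)" by simp
  have unipotent: "det (four_block_mat (1\<^sub>m n) U (0\<^sub>m m n) (1\<^sub>m m)) = 1"
    by (subst det_four_block_mat_lower_left_zero[of _ n _ m]) (use U in auto)
  have "det (four_block_mat (1\<^sub>m n - U * V) (0\<^sub>m n m) V (1\<^sub>m m)) = det (1\<^sub>m n - U * V)"
    by (subst det_four_block_mat_upper_right_zero[of _ n _ m]) (use U V UV in auto)
  then have "det M = det (1\<^sub>m n - U * V)"
    unfolding M_upper_first using U V UV unipotent by (subst det_mult[of _ "n + m"]) auto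
  moreover have "det (four_block_mat (1\<^sub>m n) (0\<^sub>m n m) V (1\<^sub>m m - V * U)) = det (1\<^sub>m m - V * U)"
    by (subst det_four_block_mat_upper_right_zero[of _ n _ m]) (use U V VU in auto)
  then have "det M = det (1\<^sub>m m - V * U)"
    unfolding M_lower_first using U V VU unipotent by (subst det_mult[of _ "n + m"]) auto
  ultimately show ?thesis by simp
qed

lemma det_one_minus_outer_prod:
  fixes u :: "'a :: idom vec"
  assumes u: "u \<in> carrier_vec n" and x: "x \<in> carrier_vec n"
  shows "det (1\<^sub>m n - outer_prod u x) = 1 - x \<bullet> u"
proof -
  define U where "U = mat n 1 (\<lambda>(i, _). u $ i)"
  define V where "V = mat 1 n (\<lambda>(_, j). x $ j)"
  have U: "U \<in> carrier_mat n 1" and V: "V \<in> carrier_mat 1 n" unfolding U_def V_def by auto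
  have "U * V = outer_prod u x" using u x unfolding U_def V_def
    by (intro eq_matI) (auto simp: scalar_prod_def)
  moreover have "V * U = mat 1 1 (\<lambda>_. x \<bullet> u)" using u x unfolding U_def V_def
    by (intro eq_matI) (auto simp: scalar_prod_def)
  moreover have "det (1\<^sub>m 1 - mat 1 1 (\<lambda>_. x \<bullet> u)) = 1 - x \<bullet> u"
    by (subst det_single) auto
  ultimately show ?thesis using det_one_minus_mult_commute[OF U V] by simp
qed

lemma det_minus_outer_prod:
  fixes A :: "'a :: idom mat"
  assumes A: "A \<in> carrier_mat n n" and B: "B \<in> carrier_mat n n" and AB: "A * B = 1\<^sub>m n"
    and x: "x \<in> carrier_vec n" and z: "z \<in> carrier_vec n"
  shows "det (A - outer_prod x z) = det A * (1 - z \<bullet> (B *\<^sub>v x))"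
proof -
  define u where "u = B *\<^sub>v x"
  have u: "u \<in> carrier_vec n" using B x unfolding u_def by simp
  have "A *\<^sub>v u = x" unfolding u_def using A B x AB by (simp flip: assoc_mult_mat_vec)
  then have "A * (1\<^sub>m n - outer_prod u z) = A - outer_prod x z"
    using A u z by (subst mult_minus_distrib_mat[of A n n]) (auto simp: mult_outer_prod)
  then have "det (A - outer_prod x z) = det A * det (1\<^sub>m n - outer_prod u z)"
    using A u z by (metis det_mult minus_carrier_mat one_carrier_mat outer_prod_carrier)
  with det_one_minus_outer_prod[OF u z] show ?thesis unfolding u_def by simp
qed

lemma sherman_morrison:
  fixes A :: "'a :: field mat"
  assumes A: "A \<in> carrier_mat n n" and B: "B \<in> carrier_mat n n" and BA: "B * A = 1\<^sub>m n"
    and x: "x \<in> carrier_vec n" and z: "z \<in> carrier_vec n"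
    and nonsingular: "z \<bullet> (B *\<^sub>v x) \<noteq> 1"
  shows "(B + (1 / (1 - z \<bullet> (B *\<^sub>v x))) \<cdot>\<^sub>m outer_prod (B *\<^sub>v x) (transpose_mat B *\<^sub>v z))
      * (A - outer_prod x z) = 1\<^sub>m n"
proof -
  define u where "u = B *\<^sub>v x"
  define v where "v = transpose_mat B *\<^sub>v z"
  define h where "h = z \<bullet> u"
  have u: "u \<in> carrier_vec n" and v: "v \<in> carrier_vec n"
    using B x z unfolding u_def v_def by auto
  have Axz: "A - outer_prod x z \<in> carrier_mat n n" using A x z by auto
  have "transpose_mat A *\<^sub>v v = transpose_mat (B * A) *\<^sub>v z"
    unfolding v_def using A B z by (simp add: transpose_mult[OF B A])
  then have At_v: "transpose_mat A *\<^sub>v v = z" using z BA by simp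
  have "x \<bullet> v = h"
    unfolding v_def h_def u_def using transpose_vec_mult_scalar[OF B x z] comm_scalar_prod x B z
    by (metis carrier_dim_vec dim_mult_mat_vec carrier_matD(1) transpose_carrier_mat)
  then have "transpose_mat (A - outer_prod x z) *\<^sub>v v = (1 - h) \<cdot>\<^sub>v z"
    using A x z v At_v
    by (simp add: transpose_minus[of A n n] transpose_outer_prod minus_mult_distrib_mat_vec[of _ n n]
        outer_prod_mult_vec) (intro eq_vecI; simp add: algebra_simps)
  then have rank_one_part: "outer_prod u v * (A - outer_prod x z) = (1 - h) \<cdot>\<^sub>m outer_prod u z"
    using outer_prod_mult[OF Axz v, of u] u z by (intro eq_matI) auto
  have "B * (A - outer_prod x z) = 1\<^sub>m n - outer_prod u z"
    using A B x z BA by (simp add: mult_minus_distrib_mat[of B n n] mult_outer_prod u_def)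
  moreover have "(B + c \<cdot>\<^sub>m outer_prod u v) * (A - outer_prod x z)
      = B * (A - outer_prod x z) + c \<cdot>\<^sub>m (outer_prod u v * (A - outer_prod x z))" for c
    using B u v Axz by (simp add: add_mult_distrib_mat[of _ n n] mult_smult_assoc_mat[of _ n n])
  moreover have "1 - h \<noteq> 0" using nonsingular unfolding h_def u_def by simp
  ultimately show ?thesis
    unfolding rank_one_part u_def[symmetric] v_def[symmetric] h_def[symmetric]
    using u z by (intro eq_matI) (auto simp: field_simps)
qed

lemma transpose_inverse_of_symmetric:
  fixes A :: "'a :: comm_ring_1 mat"
  assumes A: "A \<in> carrier_mat n n" and B: "B \<in> carrier_mat n n"
    and sym: "transpose_mat A = A" and AB: "A * B = 1\<^sub>m n"
  shows "transpose_mat B = B"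
proof -
  have "transpose_mat B * A = 1\<^sub>m n" using transpose_mult[OF A B] AB sym by simp
  then have "B = (transpose_mat B * A) * B" using B by simp
  also have "\<dots> = transpose_mat B * (A * B)" using A B by (intro assoc_mult_mat) auto
  finally show ?thesis using AB B by simp
qed

lemma transpose_gram_inverse:
  fixes X :: "'a :: comm_ring_1 mat"
  assumes X: "X \<in> carrier_mat m n" and B: "B \<in> carrier_mat n n"
    and "(transpose_mat X * X) * B = 1\<^sub>m n"
  shows "transpose_mat B = B"
proof (rule transpose_inverse_of_symmetric[OF _ B _ assms(3)])
  show "transpose_mat (transpose_mat X * X) = transpose_mat X * X"
    using transpose_mult[of "transpose_mat X" n m X n] X by simp
qed (use X in auto)

lemma det_neq_0_imp_inverse:
  fixes A :: "'a :: field mat"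
  assumes A: "A \<in> carrier_mat n n" and "det A \<noteq> 0"
  obtains B where "B \<in> carrier_mat n n" "A * B = 1\<^sub>m n" "B * A = 1\<^sub>m n"
  using det_non_zero_imp_unit[OF assms] that unfolding Units_def ring_mat_def by auto

lemma pinv_eq_gram_inverse_mult_transpose:
  fixes X :: "real mat"
  assumes X: "X \<in> carrier_mat m n" and B: "B \<in> carrier_mat n n"
    and left_inverse: "B * (transpose_mat X * X) = 1\<^sub>m n"
    and right_inverse: "(transpose_mat X * X) * B = 1\<^sub>m n"
  shows "pinv X = B * transpose_mat X"
proof -
  define A where "A = transpose_mat X * X"
  define P where "P = B * transpose_mat X"
  have A: "A \<in> carrier_mat n n" and P: "P \<in> carrier_mat n m" using X B unfolding A_def P_def by auto
  have B_sym: "transpose_mat B = B" by (rule transpose_gram_inverse[OF X B right_inverse])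
  have PX: "P * X = 1\<^sub>m n" unfolding P_def using left_inverse X B by simp
  have "transpose_mat P = X * B" unfolding P_def using X B B_sym by (simp add: transpose_mult[of _ n n])
  then have XP_sym: "transpose_mat (X * P) = X * P"
    using transpose_mult[OF X P] X B unfolding P_def by simp
  show ?thesis unfolding pinv_def P_def[symmetric]
  proof (rule the_equality)
    show "P \<in> carrier_mat (dim_col X) (dim_row X) \<and> X * P * X = X \<and> P * X * P = P \<and>
        transpose_mat (X * P) = X * P \<and> transpose_mat (P * X) = P * X"
      using X P PX XP_sym by simp
  next
    fix Q assume "Q \<in> carrier_mat (dim_col X) (dim_row X) \<and> X * Q * X = X \<and> Q * X * Q = Q \<and>
        transpose_mat (X * Q) = X * Q \<and> transpose_mat (Q * X) = Q * X"
    then have Q: "Q \<in> carrier_mat n m" and XQX: "X * Q * X = X" and XQ_sym: "transpose_mat (X * Q) = X * Q"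
      using X by auto
    have "transpose_mat X = transpose_mat X * transpose_mat (X * Q)"
      using arg_cong[OF XQX, of transpose_mat] transpose_mult[of "X * Q" m m X n] X Q by simp
    also have "\<dots> = A * Q" unfolding XQ_sym A_def using X Q by simp
    finally have "P = (B * A) * Q" unfolding P_def using B A Q by simp
    then show "Q = P" using left_inverse Q unfolding A_def by simp
  qed
qed

text \<open>The library's \<open>non_distinct_low_rank\<close> is stated for square matrices only.\<close>
lemma (in vec_space) rank_lt_if_not_distinct_cols:
  assumes A: "A \<in> carrier_mat n nc" and "\<not> distinct (cols A)"
  shows "rank A < nc"
proof -
  obtain S where S: "maximal S (\<lambda>T. T \<subseteq> set (cols A) \<and> lin_indpt T)"
    using maximal_exists[of "\<lambda>T. T \<subseteq> set (cols A) \<and> lin_indpt T" "card (set (cols A))" "{}"]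
    by (meson List.finite_set card_mono empty_iff empty_subsetI finite_lin_indpt2 rev_finite_subset)
  then have "card S \<le> card (set (cols A))" by (simp add: card_mono maximal_def)
  also have "\<dots> < length (cols A)"
    using \<open>\<not> distinct (cols A)\<close> card_distinct card_length le_neq_implies_less by metis
  also have "\<dots> = nc" using A by simp
  finally show ?thesis using rank_card_indpt[OF A S] by simp
qed

lemma (in vec_space) full_column_rank_mult_vec_eq_0:
  assumes A: "A \<in> carrier_mat n nc" and rank: "rank A = nc"
    and v: "v \<in> carrier_vec nc" and Av: "A *\<^sub>v v = 0\<^sub>v n"
  shows "v = 0\<^sub>v nc"
proof (rule ccontr)
  assume "v \<noteq> 0\<^sub>v nc"
  then have "lin_dep (set (cols A))" if "distinct (cols A)"
    using lin_depI[OF A v _ Av that] by blast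
  then show False
    using full_rank_lin_indpt[OF A rank] rank_lt_if_not_distinct_cols[OF A] rank by auto
qed

lemma det_gram_neq_0:
  fixes X :: "real mat"
  assumes X: "X \<in> carrier_mat k d" and rank: "vec_space.rank k X = d"
  shows "det (transpose_mat X * X) \<noteq> 0"
proof
  assume "det (transpose_mat X * X) = 0"
  then obtain v where v: "v \<in> carrier_vec d" "v \<noteq> 0\<^sub>v d" and "(transpose_mat X * X) *\<^sub>v v = 0\<^sub>v d"
    using det_0_iff_vec_prod_zero_field[of "transpose_mat X * X" d] X by auto
  then have "transpose_mat X *\<^sub>v (X *\<^sub>v v) = 0\<^sub>v d" using X by simp
  then have "(X *\<^sub>v v) \<bullet> (X *\<^sub>v v) = 0"
    using transpose_vec_mult_scalar[OF X v(1), of "X *\<^sub>v v"] X v by simp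
  then have "(\<Sum>i\<in>{0..<k}. (X *\<^sub>v v) $ i * (X *\<^sub>v v) $ i) = 0" using X by (simp add: scalar_prod_def)
  then have "\<forall>i\<in>{0..<k}. (X *\<^sub>v v) $ i * (X *\<^sub>v v) $ i = 0"
    by (subst sum_nonneg_eq_0_iff[symmetric]) auto
  then have "X *\<^sub>v v = 0\<^sub>v k" using X by (intro eq_vecI) auto
  then show False using vec_space.full_column_rank_mult_vec_eq_0[OF X rank v(1)] v(2) by simp
qed

lemma sum_skip_index:
  fixes f :: "nat \<Rightarrow> 'a :: ab_group_add"
  assumes "i < k"
  shows "(\<Sum>r<k - 1. f (if r < i then r else Suc r)) = (\<Sum>r<k. f r) - f i"
proof -
  let ?skip = "\<lambda>r. if r < i then r else Suc r"
  have "inj_on ?skip {..<k - 1}" by (auto simp: inj_on_def)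
  moreover have "?skip ` {..<k - 1} = {..<k} - {i}"
  proof (intro equalityI subsetI)
    fix r assume "r \<in> {..<k} - {i}"
    with assms show "r \<in> ?skip ` {..<k - 1}"
      by (cases "r < i") (auto intro: image_eqI[of _ _ r] image_eqI[of _ _ "r - 1"])
  qed (use assms in auto)
  ultimately have "(\<Sum>r<k - 1. f (?skip r)) = (\<Sum>r\<in>{..<k} - {i}. f r)"
    using sum.reindex[of ?skip "{..<k - 1}" f] by simp
  with assms show ?thesis by (simp add: sum_diff1)
qed

lemma scalar_prod_del_entry:
  fixes v :: "'a :: comm_ring vec"
  assumes "v \<in> carrier_vec k" and "w \<in> carrier_vec k" and "i < k"
  shows "del_entry v i \<bullet> del_entry w i = v \<bullet> w - v $ i * w $ i"
  using assms sum_skip_index[OF \<open>i < k\<close>, of "\<lambda>r. v $ r * w $ r"]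
  by (simp add: scalar_prod_def del_entry_def atLeast0LessThan)

lemma del_row_carrier: "X \<in> carrier_mat k d \<Longrightarrow> del_row X i \<in> carrier_mat (k - 1) d"
  unfolding del_row_def by auto

lemma del_entry_carrier: "y \<in> carrier_vec k \<Longrightarrow> del_entry y i \<in> carrier_vec (k - 1)"
  unfolding del_entry_def by auto

lemma col_del_row:
  "j < dim_col X \<Longrightarrow> col (del_row X i) j = del_entry (col X j) i"
  unfolding del_row_def del_entry_def by (intro eq_vecI) auto

lemma gram_del_row:
  fixes X :: "'a :: comm_ring_1 mat"
  assumes X: "X \<in> carrier_mat k d" and i: "i < k"
  shows "transpose_mat (del_row X i) * del_row X i
    = transpose_mat X * X - outer_prod (row X i) (row X i)"
  using X i del_row_carrier[OF X, of i] by (intro eq_matI) (auto simp: col_del_row scalar_prod_del_entry[of _ k] ac_simps)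

lemma transpose_del_row_mult_del_entry:
  fixes X :: "'a :: comm_ring_1 mat"
  assumes X: "X \<in> carrier_mat k d" and i: "i < k" and y: "y \<in> carrier_vec k"
  shows "transpose_mat (del_row X i) *\<^sub>v del_entry y i
    = transpose_mat X *\<^sub>v y - y $ i \<cdot>\<^sub>v row X i"
  using X i y del_row_carrier[OF X, of i] del_entry_carrier[OF y, of i]
  by (intro eq_vecI) (auto simp: col_del_row scalar_prod_del_entry[of _ k] ac_simps)

lemma row_symmetric_idempotent_eq_unit_vec:
  fixes H :: "'a :: linordered_idom mat"
  assumes H: "H \<in> carrier_mat n n" and sym: "transpose_mat H = H" and idem: "H * H = H"
    and i: "i < n" and diag: "H $$ (i, i) = 1"
  shows "row H i = unit_vec n i"
proof -
  have H_sym: "H $$ (l, i) = H $$ (i, l)" if "l < n" for l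
    using arg_cong[OF sym, of "\<lambda>M. M $$ (i, l)"] H i that by simp
  have "(\<Sum>l<n. H $$ (i, l) * H $$ (i, l)) = (H * H) $$ (i, i)"
    using H i H_sym by (auto simp: scalar_prod_def atLeast0LessThan intro: sum.cong)
  also have "\<dots> = 1" using idem diag by simp
  finally have "(\<Sum>l\<in>{..<n} - {i}. H $$ (i, l) * H $$ (i, l)) = 0"
    using i diag by (simp add: sum_diff1)
  then have "H $$ (i, l) = 0" if "l < n" "l \<noteq> i" for l
    using that sum_nonneg_eq_0_iff[of "{..<n} - {i}" "\<lambda>l. H $$ (i, l) * H $$ (i, l)"] by auto
  with H i diag show ?thesis by (intro eq_vecI) auto
qed

text \<open>A row of leverage one is fitted exactly by least squares: the hat matrix
  \<open>X (X\<^sup>T X)\<^sup>-\<^sup>1 X\<^sup>T\<close> is a symmetric projection, so a unit diagonal entry forces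
  its whole row to be a unit vector.\<close>
lemma fitted_value_eq_if_leverage_one:
  fixes X :: "real mat"
  assumes X: "X \<in> carrier_mat k d" and B: "B \<in> carrier_mat d d"
    and BA: "B * (transpose_mat X * X) = 1\<^sub>m d" and B_sym: "transpose_mat B = B"
    and y: "y \<in> carrier_vec k" and i: "i < k"
    and leverage: "row X i \<bullet> (B *\<^sub>v row X i) = 1"
  shows "row X i \<bullet> (B *\<^sub>v (transpose_mat X *\<^sub>v y)) = y $ i"
proof -
  define P where "P = B * transpose_mat X"
  define H where "H = X * P"
  have P: "P \<in> carrier_mat d k" and H: "H \<in> carrier_mat k k" using X B unfolding P_def H_def by auto
  have PX: "P * X = 1\<^sub>m d" unfolding P_def using BA X B by simp
  have "transpose_mat P = X * B" unfolding P_def using X B B_sym by (simp add: transpose_mult[of _ d d])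
  then have H_sym: "transpose_mat H = H"
    unfolding H_def using transpose_mult[OF X P] X B unfolding P_def by simp
  have "H * H = X * (P * (X * P))" unfolding H_def using X P by (intro assoc_mult_mat) auto
  also have "P * (X * P) = (P * X) * P" using X P by (intro assoc_mult_mat[symmetric]) auto
  finally have H_idem: "H * H = H" unfolding PX H_def using P by simp
  have H_entry: "H $$ (i, j) = row X i \<bullet> (B *\<^sub>v row X j)" if "j < k" for j
    unfolding H_def P_def using X B i that by (simp add: mult_mat_vec_def)
  have "P *\<^sub>v y = B *\<^sub>v (transpose_mat X *\<^sub>v y)" unfolding P_def using X B y by (intro assoc_mult_mat_vec) auto
  then have "H *\<^sub>v y = X *\<^sub>v (B *\<^sub>v (transpose_mat X *\<^sub>v y))" unfolding H_def using X P y by simp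
  from arg_cong[OF this, of "\<lambda>v. v $ i"]
  have "row X i \<bullet> (B *\<^sub>v (transpose_mat X *\<^sub>v y)) = row H i \<bullet> y" using X H i by simp
  also have "\<dots> = y $ i"
    using row_symmetric_idempotent_eq_unit_vec[OF H H_sym H_idem i] H_entry[OF i] leverage y i by simp
  finally show ?thesis .
qed

lemma mult_transpose_mult_vec_index:
  fixes X :: "'a :: comm_ring_1 mat"
  assumes X: "X \<in> carrier_mat k d" and M: "M \<in> carrier_mat n d"
    and v: "v \<in> carrier_vec k" and j: "j < n"
  shows "(M *\<^sub>v (transpose_mat X *\<^sub>v v)) $ j = (\<Sum>i<k. v $ i * (M *\<^sub>v row X i) $ j)"
proof -
  have "(M *\<^sub>v (transpose_mat X *\<^sub>v v)) $ j = (\<Sum>l<d. \<Sum>i<k. M $$ (j, l) * (v $ i * X $$ (i, l)))"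
    using X M v j by (simp add: scalar_prod_def atLeast0LessThan sum_distrib_left ac_simps)
  also have "\<dots> = (\<Sum>i<k. \<Sum>l<d. v $ i * (M $$ (j, l) * X $$ (i, l)))"
    by (subst sum.swap) (simp add: ac_simps)
  also have "\<dots> = (\<Sum>i<k. v $ i * (M *\<^sub>v row X i) $ j)"
    using X M j by (simp add: scalar_prod_def atLeast0LessThan sum_distrib_left)
  finally show ?thesis .
qed

lemma sum_leverages:
  fixes X :: "real mat"
  assumes X: "X \<in> carrier_mat k d" and B: "B \<in> carrier_mat d d"
    and BA: "B * (transpose_mat X * X) = 1\<^sub>m d"
  shows "(\<Sum>i<k. row X i \<bullet> (B *\<^sub>v row X i)) = real d"
proof -
  have "(\<Sum>i<k. row X i \<bullet> (B *\<^sub>v row X i)) = (\<Sum>i<k. \<Sum>j<d. col X j $ i * (B *\<^sub>v row X i) $ j)"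
    using X B by (intro sum.cong) (auto simp: scalar_prod_def atLeast0LessThan)
  also have "\<dots> = (\<Sum>j<d. (B *\<^sub>v (transpose_mat X *\<^sub>v col X j)) $ j)"
  proof (subst sum.swap, intro sum.cong refl)
    fix j assume "j \<in> {..<d}"
    then show "(\<Sum>i<k. col X j $ i * (B *\<^sub>v row X i) $ j) = (B *\<^sub>v (transpose_mat X *\<^sub>v col X j)) $ j"
      using mult_transpose_mult_vec_index[OF X B, of "col X j" j] X by simp
  qed
  also have "\<dots> = (\<Sum>j<d. col (B * (transpose_mat X * X)) j $ j)"
    using X B by (intro sum.cong) (auto simp: mult_mat_vec_def)
  also have "\<dots> = real d" unfolding BA by simp
  finally show ?thesis .
qed

lemma one_minus_leverage_mult_pinv_del_row:
  fixes X :: "real mat"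
  assumes X: "X \<in> carrier_mat k d" and B: "B \<in> carrier_mat d d"
    and AB: "(transpose_mat X * X) * B = 1\<^sub>m d" and BA: "B * (transpose_mat X * X) = 1\<^sub>m d"
    and y: "y \<in> carrier_vec k" and i: "i < k" and j: "j < d"
    and leverage: "row X i \<bullet> (B *\<^sub>v row X i) \<noteq> 1"
  defines "x \<equiv> row X i" and "u \<equiv> B *\<^sub>v row X i" and "w \<equiv> B *\<^sub>v (transpose_mat X *\<^sub>v y)"
  shows "(1 - x \<bullet> u) * (pinv (del_row X i) *\<^sub>v del_entry y i) $ j
    = (1 - x \<bullet> u) * w $ j + (x \<bullet> w - y $ i) * u $ j"
proof -
  define A where "A = transpose_mat X * X"
  define b where "b = transpose_mat X *\<^sub>v y"
  define h where "h = x \<bullet> u"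
  define c where "c = 1 / (1 - h)"
  define N where "N = B + c \<cdot>\<^sub>m outer_prod u u"
  have A: "A \<in> carrier_mat d d" using X unfolding A_def by auto
  have B_sym: "transpose_mat B = B" by (rule transpose_gram_inverse[OF X B AB])
  have x: "x \<in> carrier_vec d" and u: "u \<in> carrier_vec d" and b: "b \<in> carrier_vec d"
    using X B y i unfolding x_def u_def b_def by auto
  have w: "w = B *\<^sub>v b" unfolding w_def b_def ..
  have N: "N \<in> carrier_mat d d" unfolding N_def using B u by simp
  have left_inverse: "N * (A - outer_prod x x) = 1\<^sub>m d"
    using sherman_morrison[OF A B BA[folded A_def] x x] leverage B_sym
    unfolding N_def c_def h_def u_def x_def by simp
  moreover have "(A - outer_prod x x) * N = 1\<^sub>m d"
    by (rule mat_mult_left_right_inverse[OF N _ left_inverse]) (use A x in auto)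
  ultimately have "pinv (del_row X i) = N * transpose_mat (del_row X i)"
    using pinv_eq_gram_inverse_mult_transpose[OF del_row_carrier[OF X] N] gram_del_row[OF X i]
    unfolding A_def x_def by simp
  then have "pinv (del_row X i) *\<^sub>v del_entry y i = N *\<^sub>v (b - y $ i \<cdot>\<^sub>v x)"
    using transpose_del_row_mult_del_entry[OF X i y] N del_row_carrier[OF X, of i] del_entry_carrier[OF y, of i]
    unfolding b_def x_def by simp
  also have "\<dots> = (w - y $ i \<cdot>\<^sub>v u) + c \<cdot>\<^sub>v ((x \<bullet> w - y $ i * h) \<cdot>\<^sub>v u)"
  proof -
    have "u \<bullet> b = x \<bullet> w"
      using transpose_vec_mult_scalar[OF B b x] B_sym unfolding u_def x_def w by simp
    moreover have "u \<bullet> x = h" unfolding h_def using comm_scalar_prod[OF u x] .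
    ultimately have "u \<bullet> (b - y $ i \<cdot>\<^sub>v x) = x \<bullet> w - y $ i * h"
      using u b x by (simp add: scalar_prod_minus_distrib)
    moreover have "B *\<^sub>v (b - y $ i \<cdot>\<^sub>v x) = w - y $ i \<cdot>\<^sub>v u"
      unfolding w u_def x_def[symmetric] using B b x
      by (simp add: mult_minus_distrib_mat_vec[of B d d] mult_mat_vec[of B d d])
    moreover have "N *\<^sub>v (b - y $ i \<cdot>\<^sub>v x)
        = B *\<^sub>v (b - y $ i \<cdot>\<^sub>v x) + c \<cdot>\<^sub>v (outer_prod u u *\<^sub>v (b - y $ i \<cdot>\<^sub>v x))"
      unfolding N_def using B u b x by (intro eq_vecI) (auto simp: add_scalar_prod_distrib[of _ d])
    ultimately show ?thesis using u b x by (simp add: outer_prod_mult_vec[of u d])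
  qed
  finally have "(pinv (del_row X i) *\<^sub>v del_entry y i) $ j
      = w $ j - y $ i * u $ j + c * ((x \<bullet> w - y $ i * h) * u $ j)"
    using j u B b unfolding w by simp
  moreover have "1 - h \<noteq> 0" using leverage unfolding h_def x_def u_def by simp
  ultimately show ?thesis unfolding c_def h_def by (simp add: field_simps)
qed

text \<open>Stated entrywise and multiplied through by the determinants: for leverage one the Gram
  matrix of \<open>X\<^sub>-\<^sub>i\<close> is singular, so \<open>pinv (del_row X i)\<close> (defined by \<open>THE\<close>) is not
  determined here, not even its dimensions, but its entries get multiplied by zero.\<close>
lemma det_gram_del_row_mult_pinv_del_row:
  fixes X :: "real mat"
  assumes X: "X \<in> carrier_mat k d" and B: "B \<in> carrier_mat d d"
    and AB: "(transpose_mat X * X) * B = 1\<^sub>m d" and BA: "B * (transpose_mat X * X) = 1\<^sub>m d"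
    and y: "y \<in> carrier_vec k" and i: "i < k" and j: "j < d"
  defines "x \<equiv> row X i" and "u \<equiv> B *\<^sub>v row X i" and "w \<equiv> B *\<^sub>v (transpose_mat X *\<^sub>v y)"
  shows "det (transpose_mat (del_row X i) * del_row X i) * (pinv (del_row X i) *\<^sub>v del_entry y i) $ j
    = det (transpose_mat X * X) * ((1 - x \<bullet> u) * w $ j + (x \<bullet> w - y $ i) * u $ j)"
proof -
  have x: "x \<in> carrier_vec d" using X i unfolding x_def by auto
  have "det (transpose_mat (del_row X i) * del_row X i) = det (transpose_mat X * X) * (1 - x \<bullet> u)"
    using gram_del_row[OF X i] det_minus_outer_prod[OF _ B AB x x] X unfolding x_def u_def by simp
  moreover have "(1 - x \<bullet> u) * w $ j + (x \<bullet> w - y $ i) * u $ j = 0" if "x \<bullet> u = 1"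
    using fitted_value_eq_if_leverage_one[OF X B BA transpose_gram_inverse[OF X B AB] y i] that
    unfolding x_def u_def w_def by simp
  ultimately show ?thesis
    using one_minus_leverage_mult_pinv_del_row[OF X B AB BA y i j] unfolding x_def u_def w_def
    by (cases "x \<bullet> u = 1") (simp_all add: x_def u_def)
qed

lemma sum_leave_one_out_terms:
  fixes X :: "real mat"
  assumes X: "X \<in> carrier_mat k d" and B: "B \<in> carrier_mat d d"
    and BA: "B * (transpose_mat X * X) = 1\<^sub>m d" and y: "y \<in> carrier_vec k" and j: "j < d"
  defines "w \<equiv> B *\<^sub>v (transpose_mat X *\<^sub>v y)"
  shows "(\<Sum>i<k. (1 - row X i \<bullet> (B *\<^sub>v row X i)) * w $ j
      + (row X i \<bullet> w - y $ i) * (B *\<^sub>v row X i) $ j) = (real k - real d) * w $ j"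
proof -
  have w: "w \<in> carrier_vec d" unfolding w_def using X B y by simp
  have "(B * (transpose_mat X * X)) *\<^sub>v w = B *\<^sub>v ((transpose_mat X * X) *\<^sub>v w)"
    using X B w by (intro assoc_mult_mat_vec) auto
  also have "(transpose_mat X * X) *\<^sub>v w = transpose_mat X *\<^sub>v (X *\<^sub>v w)"
    using X w by (intro assoc_mult_mat_vec) auto
  finally have "(\<Sum>i<k. (row X i \<bullet> w) * (B *\<^sub>v row X i) $ j) = w $ j"
    using mult_transpose_mult_vec_index[OF X B _ j, of "X *\<^sub>v w"] X w j BA by auto
  moreover have "(\<Sum>i<k. y $ i * (B *\<^sub>v row X i) $ j) = w $ j"
    unfolding w_def using mult_transpose_mult_vec_index[OF X B y j] ..
  moreover have "(\<Sum>i<k. (1 - row X i \<bullet> (B *\<^sub>v row X i)) * w $ j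
      + (row X i \<bullet> w - y $ i) * (B *\<^sub>v row X i) $ j)
    = real k * w $ j - w $ j * (\<Sum>i<k. row X i \<bullet> (B *\<^sub>v row X i))
      + (\<Sum>i<k. (row X i \<bullet> w) * (B *\<^sub>v row X i) $ j) - (\<Sum>i<k. y $ i * (B *\<^sub>v row X i) $ j)"
    by (simp add: algebra_simps sum.distrib sum_subtractf sum_distrib_left)
  ultimately show ?thesis using sum_leverages[OF X B BA] by (simp add: algebra_simps)
qed

theorem lemma2:
  fixes X :: "real mat" and y :: "real vec" and k d :: nat
  assumes "d < k"
    and "X \<in> carrier_mat k d"
    and "vec_space.rank k X = d"
    and "y \<in> carrier_vec k"
  shows "pinv X *\<^sub>v y =
    vec d (\<lambda>j. \<Sum>i<k.
      (det (transpose_mat (del_row X i) * del_row X i)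
         / ((real k - real d) * det (transpose_mat X * X)))
      * (pinv (del_row X i) *\<^sub>v del_entry y i) $ j)"
proof -
  note X = assms(2) and y = assms(4)
  have gram_det: "det (transpose_mat X * X) \<noteq> 0" using det_gram_neq_0[OF X assms(3)] .
  then obtain B where B: "B \<in> carrier_mat d d"
    and AB: "(transpose_mat X * X) * B = 1\<^sub>m d" and BA: "B * (transpose_mat X * X) = 1\<^sub>m d"
    using det_neq_0_imp_inverse[of "transpose_mat X * X" d] X by auto
  define w where "w = B *\<^sub>v (transpose_mat X *\<^sub>v y)"
  have "pinv X *\<^sub>v y = w"
    unfolding pinv_eq_gram_inverse_mult_transpose[OF X B BA AB] w_def using X B y by simp
  moreover have "w $ j = (\<Sum>i<k. det (transpose_mat (del_row X i) * del_row X i)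
      / ((real k - real d) * det (transpose_mat X * X)) * (pinv (del_row X i) *\<^sub>v del_entry y i) $ j)"
    if j: "j < d" for j
  proof -
    have "(\<Sum>i<k. det (transpose_mat (del_row X i) * del_row X i)
        * (pinv (del_row X i) *\<^sub>v del_entry y i) $ j)
      = (\<Sum>i<k. det (transpose_mat X * X) * ((1 - row X i \<bullet> (B *\<^sub>v row X i)) * w $ j
          + (row X i \<bullet> w - y $ i) * (B *\<^sub>v row X i) $ j))"
      using det_gram_del_row_mult_pinv_del_row[OF X B AB BA y _ j] unfolding w_def by simp
    also have "\<dots> = det (transpose_mat X * X) * ((real k - real d) * w $ j)"
      unfolding sum_distrib_left[symmetric] w_def sum_leave_one_out_terms[OF X B BA y j] ..
    finally show ?thesis using \<open>d < k\<close> gram_det by (simp add: sum_divide_distrib[symmetric])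
  qed
  ultimately show ?thesis using B by (intro eq_vecI) (auto simp: w_def)
qed

end
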